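(* Let $G$ be a finite simple graph with $n$ vertices and minimum degree $\delta$, and let $k$ be a positive integer. Then $\gamma_{gr}^{t,k}(G)\leq n-\delta+k$ and $\gamma_{gr}^{Z,k}(G)\leq\gamma_{gr}^{k}(G)\leq n-\delta+k-1$.
   Context: For a vertex $v$, $N(v)$ is its open neighborhood and $N[v]=N(v)\cup\{v\}$. A sequence $S=(v_1,\ldots,v_m)$ of distinct vertices is a $k$-sequence (resp. $k$-$Z$-sequence, $k$-$t$-sequence) if for each $i\in[m]$ there is a vertex $u_i$ with $u_i\in N[v_i]$ (resp. $N(v_i)$, $N(v_i)$) such that the number of indices $j<i$ with $u_i\in N[v_j]$ (resp. $N[v_j]$, $N(v_j)$) is less than $k$. The numbers $\gamma_{gr}^{k}(G)$, $\gamma_{gr}^{Z,k}(G)$, $\gamma_{gr}^{t,k}(G)$ are the maximum lengths of a $k$-sequence, $k$-$Z$-sequence, $k$-$t$-sequence of $G$, respectively. *)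

theory Defs
  imports Main
begin

definition simple_graph :: "'a set \<Rightarrow> ('a \<Rightarrow> 'a \<Rightarrow> bool) \<Rightarrow> bool" where
  "simple_graph V E \<longleftrightarrow> finite V \<and> (\<forall>u v. E u v \<longrightarrow> E v u)
     \<and> (\<forall>v. \<not> E v v) \<and> (\<forall>u v. E u v \<longrightarrow> u \<in> V \<and> v \<in> V)"

definition open_nbh :: "'a set \<Rightarrow> ('a \<Rightarrow> 'a \<Rightarrow> bool) \<Rightarrow> 'a \<Rightarrow> 'a set" where
  "open_nbh V E v = {u \<in> V. E v u}"

definition closed_nbh :: "'a set \<Rightarrow> ('a \<Rightarrow> 'a \<Rightarrow> bool) \<Rightarrow> 'a \<Rightarrow> 'a set" where
  "closed_nbh V E v = insert v (open_nbh V E v)"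

definition min_degree :: "'a set \<Rightarrow> ('a \<Rightarrow> 'a \<Rightarrow> bool) \<Rightarrow> nat" where
  "min_degree V E = Min ((\<lambda>v. card (open_nbh V E v)) ` V)"

definition is_k_seq :: "'a set \<Rightarrow> ('a \<Rightarrow> 'a \<Rightarrow> bool) \<Rightarrow> nat \<Rightarrow> 'a list \<Rightarrow> bool" where
  "is_k_seq V E k S \<longleftrightarrow> distinct S \<and> set S \<subseteq> V \<and>
     (\<forall>i < length S. \<exists>u \<in> closed_nbh V E (S ! i).
        card {j. j < i \<and> u \<in> closed_nbh V E (S ! j)} < k)"

definition is_kZ_seq :: "'a set \<Rightarrow> ('a \<Rightarrow> 'a \<Rightarrow> bool) \<Rightarrow> nat \<Rightarrow> 'a list \<Rightarrow> bool" where
  "is_kZ_seq V E k S \<longleftrightarrow> distinct S \<and> set S \<subseteq> V \<and>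
     (\<forall>i < length S. \<exists>u \<in> open_nbh V E (S ! i).
        card {j. j < i \<and> u \<in> closed_nbh V E (S ! j)} < k)"

definition is_kt_seq :: "'a set \<Rightarrow> ('a \<Rightarrow> 'a \<Rightarrow> bool) \<Rightarrow> nat \<Rightarrow> 'a list \<Rightarrow> bool" where
  "is_kt_seq V E k S \<longleftrightarrow> distinct S \<and> set S \<subseteq> V \<and>
     (\<forall>i < length S. \<exists>u \<in> open_nbh V E (S ! i).
        card {j. j < i \<and> u \<in> open_nbh V E (S ! j)} < k)"

definition gamma_gr_k :: "'a set \<Rightarrow> ('a \<Rightarrow> 'a \<Rightarrow> bool) \<Rightarrow> nat \<Rightarrow> nat" where
  "gamma_gr_k V E k = Max (length ` {S. is_k_seq V E k S})"

definition gamma_gr_Zk :: "'a set \<Rightarrow> ('a \<Rightarrow> 'a \<Rightarrow> bool) \<Rightarrow> nat \<Rightarrow> nat" where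
  "gamma_gr_Zk V E k = Max (length ` {S. is_kZ_seq V E k S})"

definition gamma_gr_tk :: "'a set \<Rightarrow> ('a \<Rightarrow> 'a \<Rightarrow> bool) \<Rightarrow> nat \<Rightarrow> nat" where
  "gamma_gr_tk V E k = Max (length ` {S. is_kt_seq V E k S})"

end

theory Submission
  imports Defs
begin

text \<open>Let \<open>v\<close> be the last vertex of a sequence and \<open>u\<close> the vertex it footprints. In a simple
  graph \<open>u \<in> N(v\<^sub>j)\<close> iff \<open>v\<^sub>j \<in> N(u)\<close>, so fewer than \<open>k\<close> earlier vertices lie in \<open>N(u)\<close>, and
  with \<open>v\<close> itself at most \<open>k\<close> vertices of the sequence lie in \<open>N(u)\<close>. All the others lie
  outside \<open>N(u)\<close>, giving length \<open>\<le> n - deg u + k \<le> n - \<delta> + k\<close>. For \<open>k\<close>-sequences the same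
  argument with \<open>N[u]\<close>, of size \<open>deg u + 1\<close>, saves one more vertex. Every \<open>k\<close>-\<open>Z\<close>-sequence
  is a \<open>k\<close>-sequence because \<open>N(v) \<subseteq> N[v]\<close>.\<close>

lemma card_set_inter_le_of_butlast:
  assumes "card {j. j < length S - 1 \<and> S ! j \<in> A} < k"
  shows "card (set S \<inter> A) \<le> k"
proof (cases "S = []")
  case False
  let ?F = "filter (\<lambda>x. x \<in> A) (butlast S)"
  have S_eq: "S = butlast S @ [last S]"
    using False by simp
  have "{j. j < length S - 1 \<and> S ! j \<in> A} = {j. j < length (butlast S) \<and> butlast S ! j \<in> A}"
    by (auto simp: nth_butlast)
  then have len_F: "length ?F < k"
    using assms by (simp add: length_filter_conv_card)
  have "set S \<inter> A \<subseteq> insert (last S) (set ?F)"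
    by (subst S_eq) auto
  then have "card (set S \<inter> A) \<le> card (insert (last S) (set ?F))"
    by (intro card_mono) auto
  also have "\<dots> \<le> Suc (card (set ?F))"
    by (simp add: card_insert_if)
  also have "\<dots> \<le> Suc (length ?F)"
    using card_length[of ?F] by (simp only: Suc_le_mono)
  finally show ?thesis
    using len_F by simp
qed simp

lemma length_add_card_le_of_butlast:
  assumes "finite V" "distinct S" "set S \<subseteq> V" "A \<subseteq> V"
    and "card {j. j < length S - 1 \<and> S ! j \<in> A} < k"
  shows "length S + card A \<le> card V + k"
proof -
  have fin_A: "finite A"
    using assms(1,4) by (rule finite_subset[rotated])
  have "card (set S) + card A = card (set S \<union> A) + card (set S \<inter> A)"
    using card_Un_Int[of "set S" A] fin_A by simp
  also have "\<dots> \<le> card V + k"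
    using card_mono[OF assms(1)] assms(3,4) card_set_inter_le_of_butlast[OF assms(5)]
    by (intro add_mono) auto
  finally show ?thesis
    using assms(2) by (simp add: distinct_card)
qed

lemma finite_Collect_distinct_lists:
  assumes "finite V" "\<And>S. P S \<Longrightarrow> distinct S \<and> set S \<subseteq> V"
  shows "finite {S. P S}"
  using finite_subset_distinct[OF assms(1)] by (rule finite_subset[rotated]) (use assms(2) in auto)

lemma Max_length_distinct_lists_in:
  assumes "finite V" "\<And>S. P S \<Longrightarrow> distinct S \<and> set S \<subseteq> V" "P []"
  shows "Max (length ` {S. P S}) \<in> length ` {S. P S}"
  using finite_Collect_distinct_lists[OF assms(1,2)] assms(3) by (intro Max_in) auto

lemma open_nbh_subset: "open_nbh V E v \<subseteq> V"
  by (auto simp: open_nbh_def)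

lemma closed_nbh_subset: "v \<in> V \<Longrightarrow> closed_nbh V E v \<subseteq> V"
  by (auto simp: closed_nbh_def open_nbh_def)

lemma mem_open_nbh_commute:
  "simple_graph V E \<Longrightarrow> u \<in> open_nbh V E w \<longleftrightarrow> w \<in> open_nbh V E u"
  by (auto simp: simple_graph_def open_nbh_def)

lemma mem_closed_nbh_commute:
  "simple_graph V E \<Longrightarrow> u \<in> closed_nbh V E w \<longleftrightarrow> w \<in> closed_nbh V E u"
  using mem_open_nbh_commute by (fastforce simp: closed_nbh_def)

lemma card_closed_nbh:
  assumes "simple_graph V E"
  shows "card (closed_nbh V E v) = Suc (card (open_nbh V E v))"
proof -
  have "finite (open_nbh V E v)" "v \<notin> open_nbh V E v"
    using assms by (auto simp: simple_graph_def open_nbh_def)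
  then show ?thesis
    by (simp add: closed_nbh_def)
qed

lemma min_degree_le_card_open_nbh:
  "simple_graph V E \<Longrightarrow> v \<in> V \<Longrightarrow> min_degree V E \<le> card (open_nbh V E v)"
  unfolding min_degree_def simple_graph_def by (intro Min_le) auto

lemma min_degree_less_card:
  assumes "simple_graph V E" "V \<noteq> {}"
  shows "min_degree V E < card V"
proof -
  obtain v where v: "v \<in> V"
    using assms(2) by blast
  have fin: "finite V"
    using assms(1) by (simp add: simple_graph_def)
  have "open_nbh V E v \<subset> V"
    using assms(1) v by (auto simp: simple_graph_def open_nbh_def)
  then have "card (open_nbh V E v) < card V"
    using fin by (rule psubset_card_mono[rotated])
  then show ?thesis
    using min_degree_le_card_open_nbh[OF assms(1) v] by simp
qed

lemma is_kt_seqD: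
  "is_kt_seq V E k S \<Longrightarrow> i < length S \<Longrightarrow>
    \<exists>u \<in> open_nbh V E (S ! i). card {j. j < i \<and> u \<in> open_nbh V E (S ! j)} < k"
  by (simp add: is_kt_seq_def)

lemma is_k_seqD:
  "is_k_seq V E k S \<Longrightarrow> i < length S \<Longrightarrow>
    \<exists>u \<in> closed_nbh V E (S ! i). card {j. j < i \<and> u \<in> closed_nbh V E (S ! j)} < k"
  by (simp add: is_k_seq_def)

lemma kt_seq_length_add_min_degree_le:
  assumes G: "simple_graph V E" and "V \<noteq> {}" and S: "is_kt_seq V E k S"
  shows "length S + min_degree V E \<le> card V + k"
proof (cases "S = []")
  case True
  then show ?thesis
    using min_degree_less_card[OF G \<open>V \<noteq> {}\<close>] by simp
next
  case False
  let ?m = "length S - 1"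
  have "?m < length S"
    using False by simp
  then obtain u where u: "u \<in> open_nbh V E (S ! ?m)"
    and count: "card {j. j < ?m \<and> u \<in> open_nbh V E (S ! j)} < k"
    using is_kt_seqD[OF S] by blast
  have "u \<in> V"
    using subsetD[OF open_nbh_subset u] .
  have "{j. j < ?m \<and> u \<in> open_nbh V E (S ! j)} = {j. j < ?m \<and> S ! j \<in> open_nbh V E u}"
    by (simp only: mem_open_nbh_commute[OF G, of u])
  then have "length S + card (open_nbh V E u) \<le> card V + k"
    using G S count open_nbh_subset
    by (intro length_add_card_le_of_butlast) (simp_all add: simple_graph_def is_kt_seq_def)
  then show ?thesis
    using min_degree_le_card_open_nbh[OF G \<open>u \<in> V\<close>] by simp
qed

lemma k_seq_length_add_min_degree_less:
  assumes G: "simple_graph V E" and "V \<noteq> {}" and S: "is_k_seq V E k S"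
  shows "length S + min_degree V E < card V + k"
proof (cases "S = []")
  case True
  then show ?thesis
    using min_degree_less_card[OF G \<open>V \<noteq> {}\<close>] by simp
next
  case False
  let ?m = "length S - 1"
  have "?m < length S"
    using False by simp
  then obtain u where u: "u \<in> closed_nbh V E (S ! ?m)"
    and count: "card {j. j < ?m \<and> u \<in> closed_nbh V E (S ! j)} < k"
    using is_k_seqD[OF S] by blast
  have "S ! ?m \<in> V"
    using S nth_mem[OF \<open>?m < length S\<close>] by (auto simp: is_k_seq_def)
  have "u \<in> V"
    using subsetD[OF closed_nbh_subset[OF \<open>S ! ?m \<in> V\<close>] u] .
  have "{j. j < ?m \<and> u \<in> closed_nbh V E (S ! j)} = {j. j < ?m \<and> S ! j \<in> closed_nbh V E u}"
    by (simp only: mem_closed_nbh_commute[OF G, of u])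
  then have "length S + card (closed_nbh V E u) \<le> card V + k"
    using G S count closed_nbh_subset[OF \<open>u \<in> V\<close>]
    by (intro length_add_card_le_of_butlast) (simp_all add: simple_graph_def is_k_seq_def)
  then show ?thesis
    using min_degree_le_card_open_nbh[OF G \<open>u \<in> V\<close>] card_closed_nbh[OF G] by simp
qed

lemma kZ_seq_imp_k_seq: "is_kZ_seq V E k S \<Longrightarrow> is_k_seq V E k S"
  unfolding is_kZ_seq_def is_k_seq_def closed_nbh_def by blast

lemma gamma_gr_tk_add_min_degree_le:
  assumes "simple_graph V E" "V \<noteq> {}"
  shows "gamma_gr_tk V E k + min_degree V E \<le> card V + k"
proof -
  have "gamma_gr_tk V E k \<in> length ` {S. is_kt_seq V E k S}"
    using assms(1) unfolding gamma_gr_tk_def simple_graph_def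
    by (intro Max_length_distinct_lists_in[of V]) (auto simp: is_kt_seq_def)
  then show ?thesis
    using kt_seq_length_add_min_degree_le[OF assms] by auto
qed

lemma gamma_gr_k_add_min_degree_less:
  assumes "simple_graph V E" "V \<noteq> {}"
  shows "gamma_gr_k V E k + min_degree V E < card V + k"
proof -
  have "gamma_gr_k V E k \<in> length ` {S. is_k_seq V E k S}"
    using assms(1) unfolding gamma_gr_k_def simple_graph_def
    by (intro Max_length_distinct_lists_in[of V]) (auto simp: is_k_seq_def)
  then show ?thesis
    using k_seq_length_add_min_degree_less[OF assms] by auto
qed

lemma gamma_gr_Zk_le_gamma_gr_k:
  assumes "simple_graph V E"
  shows "gamma_gr_Zk V E k \<le> gamma_gr_k V E k"
proof -
  have fin: "finite V"
    using assms by (simp add: simple_graph_def)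
  have "gamma_gr_Zk V E k \<in> length ` {S. is_kZ_seq V E k S}"
    unfolding gamma_gr_Zk_def using fin
    by (intro Max_length_distinct_lists_in) (auto simp: is_kZ_seq_def)
  moreover have "finite {S. is_k_seq V E k S}"
    using fin by (rule finite_Collect_distinct_lists) (simp add: is_k_seq_def)
  ultimately show ?thesis
    unfolding gamma_gr_k_def by (auto intro: Max_ge kZ_seq_imp_k_seq)
qed

theorem mainTheorem3:
  fixes V :: "'a set" and E :: "'a \<Rightarrow> 'a \<Rightarrow> bool" and k n \<delta> :: nat
  assumes "simple_graph V E" and "V \<noteq> {}"
    and "n = card V" and "\<delta> = min_degree V E" and "k \<ge> 1"
  shows "int (gamma_gr_tk V E k) \<le> int n - int \<delta> + int k
    \<and> gamma_gr_Zk V E k \<le> gamma_gr_k V E k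
    \<and> int (gamma_gr_k V E k) \<le> int n - int \<delta> + int k - 1"
  using gamma_gr_tk_add_min_degree_le[OF assms(1,2), of k]
    gamma_gr_Zk_le_gamma_gr_k[OF assms(1), of k]
    gamma_gr_k_add_min_degree_less[OF assms(1,2), of k] assms(3,4)
  by linarith

end
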